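(* Let $\varphi(x,y)$ be a formula in the language of $\mathbf{A}^{\natural}$ and let $a\in A$. If $\varphi(a^1,a^3)\neq\varphi(a^1,a^1)$, then $\varphi(a^1,a^3)\in A_1\cup A_3\cup A_4$.
   Context: $\mathbf{A}$ is a fixed non-trivial algebra whose set $\mathcal{F}$ of basic operations contains no constant symbols, and $h$ is a unary function on $A$. Construction of $\mathbf{A}^{\natural}$: universe is the disjoint union of eight copies $A_1,\dots,A_8$ of $A$ ($a^i$ is the copy of $a$ in $A_i$); operations: each $n$-ary $f\in\mathcal{F}$ with $f(a_1^{m_1},\dots,a_n^{m_n})=(f^{\mathbf{A}}(a_1,\dots,a_n))^5$; a ternary $\heartsuit$ with $\heartsuit(a^m,b^n,c^k)=a^1$ if $a^m=c^k$, $h(a)^5=b^n$, $m\in\{1,3,4\}$; $=a^2$ if $a^m=c^k$, $h(a)^5=b^n$, $m\in\{2,5,6,7,8\}$; $=a^4$ if $m,k\in\{1,3,4\}$ and ($a^m\ne c^k$ or $h(a)^5\ne b^n$); $=a^7$ if $\{m,k\}\cap\{2,5,6,7,8\}\ne\emptyset$ and ($a^m\ne c^k$ or $h(a)^5\ne b^n$); a unary $\Box$ with $\Box(a^m)=a^m$ for $m\in\{1,2\}$, $a^{m-1}$ for even $m\ge3$, $a^{m+1}$ for odd $m\ge3$. *)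

theory Defs
  imports Main
begin

text \<open>The algebra A: universe = the type 'a, basic operation symbols of type 'f with
  arities ar, interpretation opA.  Elements of A-natural are pairs (a, i) with
  1 <= i <= 8, standing for the copy a^i of a in A_i.\<close>

type_synonym 'a elt = "'a \<times> nat"

datatype 'f nterm =
    Var nat
  | Fop 'f "'f nterm list"
  | Heart "'f nterm" "'f nterm" "'f nterm"
  | Box "'f nterm"

definition I134 :: "nat set" where "I134 = {1,3,4}"
definition I25678 :: "nat set" where "I25678 = {2,5,6,7,8}"

definition heart :: "('a \<Rightarrow> 'a) \<Rightarrow> 'a elt \<Rightarrow> 'a elt \<Rightarrow> 'a elt \<Rightarrow> 'a elt" where
  "heart h x y z =
     (let a = fst x; m = snd x; k = snd z in
      if x = z \<and> (h a, 5) = y then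
        (if m \<in> I134 then (a, 1) else (a, 2))
      else if m \<in> I134 \<and> k \<in> I134 then (a, 4)
      else (a, 7))"

definition box :: "'a elt \<Rightarrow> 'a elt" where
  "box x = (let a = fst x; m = snd x in
     if m \<in> {1,2} then (a, m)
     else if even m then (a, m - 1) else (a, m + 1))"

definition fop :: "('f \<Rightarrow> 'a list \<Rightarrow> 'a) \<Rightarrow> 'f \<Rightarrow> 'a elt list \<Rightarrow> 'a elt" where
  "fop opA f xs = (opA f (map fst xs), 5)"

fun eval :: "('f \<Rightarrow> 'a list \<Rightarrow> 'a) \<Rightarrow> ('a \<Rightarrow> 'a) \<Rightarrow> (nat \<Rightarrow> 'a elt) \<Rightarrow> 'f nterm \<Rightarrow> 'a elt" where
  "eval opA h env (Var i) = env i"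
| "eval opA h env (Fop f ts) = fop opA f (map (eval opA h env) ts)"
| "eval opA h env (Heart s t u) = heart h (eval opA h env s) (eval opA h env t) (eval opA h env u)"
| "eval opA h env (Box t) = box (eval opA h env t)"

fun wf_term2 :: "('f \<Rightarrow> nat) \<Rightarrow> 'f nterm \<Rightarrow> bool" where
  "wf_term2 ar (Var i) = (i \<in> {0, 1})"
| "wf_term2 ar (Fop f ts) = (length ts = ar f \<and> (\<forall>t\<in>set ts. wf_term2 ar t))"
| "wf_term2 ar (Heart s t u) = (wf_term2 ar s \<and> wf_term2 ar t \<and> wf_term2 ar u)"
| "wf_term2 ar (Box t) = wf_term2 ar t"

definition eval2 :: "('f \<Rightarrow> 'a list \<Rightarrow> 'a) \<Rightarrow> ('a \<Rightarrow> 'a) \<Rightarrow> 'f nterm \<Rightarrow> 'a elt \<Rightarrow> 'a elt \<Rightarrow> 'a elt" where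
  "eval2 opA h phi p q = eval opA h (\<lambda>i. if i = 0 then p else q) phi"

end

theory Submission
  imports Defs
begin

text \<open>Let \<open>\<theta>\<close> be the equivalence relation on \<open>A\<^sup>\<natural>\<close> identifying \<open>a\<^sup>1\<close>, \<open>a\<^sup>3\<close>, \<open>a\<^sup>4\<close> for each
  \<open>a\<close> and nothing else. It is a congruence: the operations of \<open>A\<close> only read the
  underlying elements, \<open>\<box>\<close> permutes \<open>A\<^sub>1 \<union> A\<^sub>3 \<union> A\<^sub>4\<close>, the second argument of \<open>\<heartsuit>\<close>
  matters only through the test \<open>h(a)\<^sup>5 = b\<^sup>n\<close> with \<open>5 \<notin> {1,3,4}\<close>, and changing its first
  or third argument within a nontrivial \<open>\<theta>\<close>-class either yields a value in
  \<open>A\<^sub>1 \<union> A\<^sub>3 \<union> A\<^sub>4\<close> or leaves the value \<open>a\<^sup>7\<close> unchanged. Since \<open>a\<^sup>3 \<theta> a\<^sup>1\<close>, the values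
  \<open>\<phi>(a\<^sup>1,a\<^sup>3)\<close> and \<open>\<phi>(a\<^sup>1,a\<^sup>1)\<close> are \<open>\<theta>\<close>-related, so if they differ both lie in
  \<open>A\<^sub>1 \<union> A\<^sub>3 \<union> A\<^sub>4\<close>.\<close>

definition theta134 :: "'a elt \<Rightarrow> 'a elt \<Rightarrow> bool" where
  "theta134 p q \<longleftrightarrow> fst p = fst q \<and> (p = q \<or> snd p \<in> I134 \<and> snd q \<in> I134)"

lemma theta134_refl: "theta134 p p"
  by (simp add: theta134_def)

lemma theta134_fop:
  assumes "list_all2 theta134 xs ys"
  shows "fop opA f xs = fop opA f ys"
proof -
  have "map fst xs = map fst ys"
    using assms by (induction rule: list_all2_induct) (simp_all add: theta134_def)
  then show ?thesis by (simp add: fop_def)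
qed

lemma fst_box: "fst (box x) = fst x"
  unfolding box_def Let_def by simp

lemma box_I134: "snd x \<in> I134 \<Longrightarrow> snd (box x) \<in> I134"
  unfolding box_def Let_def I134_def by auto

lemma theta134_box: "theta134 p q \<Longrightarrow> theta134 (box p) (box q)"
  unfolding theta134_def using fst_box box_I134 by metis

lemma fst_heart: "fst (heart h x y z) = fst x"
  unfolding heart_def Let_def by simp

lemma heart_I134: "snd x \<in> I134 \<Longrightarrow> snd z \<in> I134 \<Longrightarrow> snd (heart h x y z) \<in> I134"
  unfolding heart_def Let_def by (simp add: I134_def)

lemma heart_off_diagonal:
  "x \<noteq> z \<Longrightarrow> heart h x y z = (fst x, if snd x \<in> I134 \<and> snd z \<in> I134 then 4 else 7)"
  unfolding heart_def Let_def by simp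

lemma heart_second_arg_I134:
  assumes "snd y \<in> I134" "snd y' \<in> I134"
  shows "heart h x y z = heart h x y' z"
proof -
  have "(5::nat) \<notin> I134" by (simp add: I134_def)
  then have "y \<noteq> (h (fst x), 5)" "y' \<noteq> (h (fst x), 5)" using assms by auto
  then show ?thesis unfolding heart_def Let_def by simp
qed

lemma theta134_heart:
  assumes x: "theta134 x1 x2" and y: "theta134 y1 y2" and z: "theta134 z1 z2"
  shows "theta134 (heart h x1 y1 z1) (heart h x2 y2 z2)"
proof -
  have "heart h x1 y1 z1 = heart h x2 y2 z2 \<or>
          snd (heart h x1 y1 z1) \<in> I134 \<and> snd (heart h x2 y2 z2) \<in> I134"
  proof (cases "x1 = x2 \<and> z1 = z2")
    case True
    then show ?thesis
      using y heart_second_arg_I134 unfolding theta134_def by metis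
  next
    case False
    consider "x1 \<noteq> x2" "snd x1 \<in> I134" "snd x2 \<in> I134" | "x1 = x2" "z1 \<noteq> z2"
      using x False unfolding theta134_def by blast
    then show ?thesis
    proof cases
      case 1
      show ?thesis
      proof (cases "z1 = z2 \<and> snd z1 \<notin> I134")
        case True
        then have "x1 \<noteq> z1" "x2 \<noteq> z2" using 1 by auto
        then show ?thesis
          using True x heart_off_diagonal[of x1 z1 h y1] heart_off_diagonal[of x2 z2 h y2]
          unfolding theta134_def by auto
      next
        case False
        then show ?thesis
          using 1 z heart_I134 unfolding theta134_def by metis
      qed
    next
      case 2
      then have zI: "snd z1 \<in> I134" "snd z2 \<in> I134" using z unfolding theta134_def by auto
      show ?thesis
      proof (cases "snd x1 \<in> I134")
        case True
        then show ?thesis using 2 zI heart_I134 by metis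
      next
        case False
        then have "x2 \<noteq> z1" "x2 \<noteq> z2" using 2 zI by auto
        then show ?thesis
          using 2 False heart_off_diagonal[of x2 z1 h y1] heart_off_diagonal[of x2 z2 h y2] by simp
      qed
    qed
  qed
  then show ?thesis
    using x by (simp add: theta134_def fst_heart)
qed

lemma theta134_eval:
  assumes "\<And>i. theta134 (env1 i) (env2 i)"
  shows "theta134 (eval opA h env1 t) (eval opA h env2 t)"
proof (induction t)
  case (Var i)
  then show ?case using assms by simp
next
  case (Fop f ts)
  have "list_all2 theta134 (map (eval opA h env1) ts) (map (eval opA h env2) ts)"
    using Fop.IH by (simp add: list.rel_map list.rel_refl_strong)
  then show ?case
    by (simp add: theta134_fop[where opA = opA and f = f] theta134_refl)
next
  case (Heart s t u)
  then show ?case by (simp add: theta134_heart)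
next
  case (Box t)
  then show ?case by (simp add: theta134_box)
qed

theorem lemma6p7:
  fixes opA :: "'f \<Rightarrow> 'a list \<Rightarrow> 'a" and ar :: "'f \<Rightarrow> nat"
    and h :: "'a \<Rightarrow> 'a" and phi :: "'f nterm" and a :: 'a
  assumes nontrivial: "\<exists>b c :: 'a. b \<noteq> c"
    and no_constants: "\<forall>f. ar f > 0"
    and wf: "wf_term2 ar phi"
    and ne: "eval2 opA h phi (a, 1) (a, 3) \<noteq> eval2 opA h phi (a, 1) (a, 1)"
  shows "snd (eval2 opA h phi (a, 1) (a, 3)) \<in> {1, 3, 4}"
proof -
  have "theta134 (eval2 opA h phi (a, 1) (a, 3)) (eval2 opA h phi (a, 1) (a, 1))"
    unfolding eval2_def by (rule theta134_eval) (simp add: theta134_def I134_def)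
  then show ?thesis
    using ne by (simp add: theta134_def I134_def)
qed

end
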